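(* Let $n\ge 2$ and let $W$ be a channel from $\{1,2\}$ to $\{1,\dots,n\}$. Then $C_{01}(\lambda)=C_{11}(\lambda)$ for every $\lambda\in\Lambda(W)$; consequently $\underline{C}_{01}(W)=1-\overline{P}_W(1)$ and $\overline{C}_{01}(W)=1-\underline{P}_W(1)$.
   Context: A channel is a row-stochastic matrix. With $\mathcal{X}=\{1,\dots,m\}$ (here $m=2$) and $\mathcal{Y}=\{1,\dots,n\}$, a deterministic channel is a 0-1 channel (a map $D:\mathcal{X}\to\mathcal{Y}$); $\mathcal{D}$ is the set of them and $\mathrm{rank}(D)$ the matrix rank. $\Lambda(W)=\{\lambda\text{ probability distribution on }\mathcal{D}: W=\sum_D\lambda_DD\}$. $I(\mu,K)=\sum_x\mu_x D(K_{x,*}\|\mu K)$ (KL divergence, base 2). $C_{11}(\lambda)=\sum_D\lambda_D\log_2\mathrm{rank}(D)$, $C_{01}(\lambda)=\max_\mu\sum_D\lambda_DI(\mu,D)$ over distributions $\mu$ on $\mathcal{X}$. $\underline{C}_{01}(W)=\inf_{\lambda\in\Lambda(W)}C_{01}(\lambda)$, $\overline{C}_{01}(W)=\sup_{\lambda\in\Lambda(W)}C_{01}(\lambda)$. $P_\lambda(r)=\lambda(\{D:\mathrm{rank}(D)=r\})$, $\underline{P}_W(r)=\min_{\lambda\in\Lambda(W)}P_\lambda(r)$, $\overline{P}_W(r)=\max_{\lambda\in\Lambda(W)}P_\lambda(r)$. *)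

theory Defs
  imports "HOL-Analysis.Analysis" "HOL-Library.Numeral_Type"
begin

text \<open>Input alphabet X = the two-element type 2, output alphabet Y = a finite type 'n
  with CARD('n) = n. A channel is a row-stochastic matrix real^'n^2 (row x, column y).\<close>

definition channel :: "real^'n::finite^'m::finite \<Rightarrow> bool" where
  "channel W \<longleftrightarrow> (\<forall>x y. 0 \<le> W$x$y) \<and> (\<forall>x. (\<Sum>y\<in>UNIV. W$x$y) = 1)"

definition detmat :: "('m::finite \<Rightarrow> 'n::finite) \<Rightarrow> real^'n^'m" where
  "detmat D = (\<chi> x y. if D x = y then 1 else 0)"

definition prob_dist :: "('a::finite \<Rightarrow> real) \<Rightarrow> bool" where
  "prob_dist p \<longleftrightarrow> (\<forall>a. 0 \<le> p a) \<and> (\<Sum>a\<in>UNIV. p a) = 1"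

definition Lambda :: "real^'n::finite^'m::finite \<Rightarrow> (('m \<Rightarrow> 'n) \<Rightarrow> real) set" where
  "Lambda W = {lam. prob_dist lam \<and> W = (\<Sum>D\<in>UNIV. lam D *\<^sub>R detmat D)}"

text \<open>KL divergence in bits, with the convention 0 log(0/q) = 0.\<close>
definition KL :: "('n::finite \<Rightarrow> real) \<Rightarrow> ('n \<Rightarrow> real) \<Rightarrow> real" where
  "KL p q = (\<Sum>y | 0 < p y. p y * log 2 (p y / q y))"

definition mutual_info :: "('m::finite \<Rightarrow> real) \<Rightarrow> real^'n::finite^'m \<Rightarrow> real" where
  "mutual_info \<mu> K = (\<Sum>x\<in>UNIV. \<mu> x * KL (\<lambda>y. K$x$y) (\<lambda>y. \<Sum>x'\<in>UNIV. \<mu> x' * K$x'$y))"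

definition C11 :: "(('m::finite \<Rightarrow> 'n::finite) \<Rightarrow> real) \<Rightarrow> real" where
  "C11 lam = (\<Sum>D\<in>UNIV. lam D * log 2 (real (rank (detmat D))))"

text \<open>The maximum over input distributions (attained by compactness) written as a supremum.\<close>
definition C01 :: "(('m::finite \<Rightarrow> 'n::finite) \<Rightarrow> real) \<Rightarrow> real" where
  "C01 lam = (SUP \<mu>\<in>{\<mu>. prob_dist \<mu>}. \<Sum>D\<in>UNIV. lam D * mutual_info \<mu> (detmat D))"

definition C01_lower :: "real^'n::finite^'m::finite \<Rightarrow> real" where
  "C01_lower W = (INF lam\<in>Lambda W. C01 lam)"

definition C01_upper :: "real^'n::finite^'m::finite \<Rightarrow> real" where
  "C01_upper W = (SUP lam\<in>Lambda W. C01 lam)"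

definition P_rank :: "(('m::finite \<Rightarrow> 'n::finite) \<Rightarrow> real) \<Rightarrow> nat \<Rightarrow> real" where
  "P_rank lam r = (\<Sum>D | rank (detmat D) = r. lam D)"

text \<open>min / max over Lambda(W) (attained by compactness) written as Inf / Sup.\<close>
definition P_lower :: "real^'n::finite^'m::finite \<Rightarrow> nat \<Rightarrow> real" where
  "P_lower W r = (INF lam\<in>Lambda W. P_rank lam r)"

definition P_upper :: "real^'n::finite^'m::finite \<Rightarrow> nat \<Rightarrow> real" where
  "P_upper W r = (SUP lam\<in>Lambda W. P_rank lam r)"

end

theory Submission
  imports Defs
begin

text \<open>For a map D on two inputs, the mutual information of the 0-1 channel of D vanishes when D is
  constant and equals the entropy of the input law otherwise; this entropy is at most one bit, with
  equality for the uniform law. The rank of D is 1 or 2 in the same two cases, so both \<open>C01 \<lambda>\<close> and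
  \<open>C11 \<lambda>\<close> equal the \<open>\<lambda>\<close>-probability of rank 2, that is \<open>1 - P\<^sub>\<lambda>(1)\<close>. Taking infimum and supremum over
  \<open>\<Lambda>(W)\<close>, which contains the product of the rows of W, gives the bounds.\<close>

lemma row_detmat: "row x (detmat D) = axis (D x) 1"
  unfolding row_def detmat_def axis_def by (auto simp: vec_eq_iff)

lemma rank_detmat: "rank (detmat D) = card (range D)"
proof -
  have rows: "rows (detmat D) = (\<lambda>y. axis y 1) ` range D"
    unfolding rows_def row_detmat by auto
  have "independent ((\<lambda>y. axis y (1::real)) ` range D)"
    by (rule independent_substdbasis) (auto simp: Basis_vec_def)
  moreover have "inj_on (\<lambda>y. axis y (1::real)) (range D)"
    by (auto intro: inj_onI simp: axis_eq_axis)
  ultimately show ?thesis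
    unfolding row_rank_def rows by (simp add: dim_eq_card_independent card_image)
qed

lemma rank_detmat_2:
  fixes D :: "2 \<Rightarrow> 'n::finite"
  shows "rank (detmat D) = (if D 1 = D 2 then 1 else 2)"
proof -
  have "range D = {D 1, D 2}"
    using exhaust_2 by (auto simp: UNIV_2)
  then show ?thesis
    by (simp add: rank_detmat)
qed

lemma KL_detmat: "KL (\<lambda>y. detmat D $ x $ y) q = log 2 (1 / q (D x))"
proof -
  have "{y. 0 < detmat D $ x $ y} = {D x}"
    by (auto simp: detmat_def)
  then show ?thesis
    unfolding KL_def by (simp add: detmat_def)
qed

lemma mutual_info_detmat:
  "mutual_info \<mu> (detmat D) = (\<Sum>x\<in>UNIV. \<mu> x * log 2 (1 / sum \<mu> {x'. D x' = D x}))"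
proof -
  have "(\<Sum>x'\<in>UNIV. \<mu> x' * detmat D $ x' $ D x) = sum \<mu> {x'. D x' = D x}" for x
    by (simp add: detmat_def sum.inter_filter[symmetric] if_distrib cong: if_cong)
  then show ?thesis
    unfolding mutual_info_def KL_detmat by simp
qed

definition entropy :: "('a::finite \<Rightarrow> real) \<Rightarrow> real" where
  "entropy p = (\<Sum>x\<in>UNIV. p x * log 2 (1 / p x))"

lemma mutual_info_detmat_2:
  fixes D :: "2 \<Rightarrow> 'n::finite"
  assumes "prob_dist \<mu>"
  shows "mutual_info \<mu> (detmat D) = (if D 1 = D 2 then 0 else entropy \<mu>)"
proof -
  have "\<mu> 1 + \<mu> 2 = 1"
    using assms by (simp add: prob_dist_def sum_2)
  moreover have "{x'. D x' = D x} = (if D 1 = D 2 then UNIV else {x})" for x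
    by (auto simp: set_eq_iff; metis exhaust_2)
  ultimately show ?thesis
    unfolding mutual_info_detmat entropy_def by (simp add: sum_2)
qed

text \<open>Termwise Gibbs inequality against the constant weight c: it is \<open>ln t \<le> t - 1\<close> at \<open>t = c / p\<close>.\<close>
lemma entropy_term_le:
  assumes "0 \<le> p" and "0 < c"
  shows "p * log 2 (1 / p) \<le> p * log 2 (1 / c) + (c - p) / ln 2"
proof (cases "p = 0")
  case True
  with assms show ?thesis by simp
next
  case False
  with assms have p: "0 < p" by simp
  have "p * ln (c / p) \<le> p * (c / p - 1)"
    using p assms(2) by (intro mult_left_mono ln_le_minus_one) auto
  also have "\<dots> = c - p"
    using p by (simp add: field_simps)
  finally have "p * ln (c / p) / ln 2 \<le> (c - p) / ln 2"
    by (simp add: divide_right_mono)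
  moreover have "p * log 2 (1 / p) = p * log 2 (1 / c) + p * ln (c / p) / ln 2"
    using p assms(2) by (simp add: log_def ln_div field_simps)
  ultimately show ?thesis by simp
qed

lemma entropy_le_log_card:
  assumes "prob_dist (p :: 'a::finite \<Rightarrow> real)"
  shows "entropy p \<le> log 2 CARD('a)"
proof -
  define c where "c = 1 / real CARD('a)"
  have c: "0 < c" "real CARD('a) * c = 1"
    by (simp_all add: c_def)
  have "entropy p \<le> (\<Sum>x\<in>UNIV. p x * log 2 (1 / c) + (c - p x) / ln 2)"
    unfolding entropy_def using assms c(1)
    by (intro sum_mono entropy_term_le) (auto simp: prob_dist_def)
  also have "\<dots> = log 2 (1 / c) + (real CARD('a) * c - 1) / ln 2"
    using assms by (simp add: prob_dist_def sum.distrib sum_divide_distrib[symmetric]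
        sum_subtractf sum_distrib_right[symmetric])
  also have "\<dots> = log 2 CARD('a)"
    using c by (simp add: c_def)
  finally show ?thesis .
qed

lemma prob_dist_uniform: "prob_dist (\<lambda>_::'a::finite. 1 / real CARD('a))"
  by (simp add: prob_dist_def)

lemma entropy_uniform: "entropy (\<lambda>_::'a::finite. 1 / real CARD('a)) = log 2 CARD('a)"
  by (simp add: entropy_def)

lemma P_rank_eq_sum_if: "P_rank lam r = (\<Sum>D\<in>UNIV. if rank (detmat D) = r then lam D else 0)"
  unfolding P_rank_def by (simp add: sum.inter_filter[of UNIV, simplified])

lemma P_rank_nonneg: "prob_dist lam \<Longrightarrow> 0 \<le> P_rank lam r"
  unfolding P_rank_def prob_dist_def by (intro sum_nonneg) auto

lemma P_rank_1_plus_P_rank_2: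
  fixes lam :: "(2 \<Rightarrow> 'n::finite) \<Rightarrow> real"
  assumes "prob_dist lam"
  shows "P_rank lam 1 + P_rank lam 2 = 1"
proof -
  have "P_rank lam 1 + P_rank lam 2 = (\<Sum>D\<in>UNIV. lam D)"
    unfolding P_rank_eq_sum_if rank_detmat_2 sum.distrib[symmetric] by (intro sum.cong) auto
  with assms show ?thesis
    by (simp add: prob_dist_def)
qed

lemma C11_eq_P_rank_2: "C11 (lam :: (2 \<Rightarrow> 'n::finite) \<Rightarrow> real) = P_rank lam 2"
  unfolding C11_def P_rank_eq_sum_if rank_detmat_2 by (intro sum.cong) auto

lemma sum_mutual_info_detmat_2:
  fixes lam :: "(2 \<Rightarrow> 'n::finite) \<Rightarrow> real"
  assumes "prob_dist \<mu>"
  shows "(\<Sum>D\<in>UNIV. lam D * mutual_info \<mu> (detmat D)) = P_rank lam 2 * entropy \<mu>"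
  unfolding P_rank_eq_sum_if rank_detmat_2 mutual_info_detmat_2[OF assms] sum_distrib_right
  by (intro sum.cong) auto

lemma C01_eq_P_rank_2:
  fixes lam :: "(2 \<Rightarrow> 'n::finite) \<Rightarrow> real"
  assumes "prob_dist lam"
  shows "C01 lam = P_rank lam 2"
proof -
  have "C01 lam = Sup ((\<lambda>\<mu>::2 \<Rightarrow> real. P_rank lam 2 * entropy \<mu>) ` {\<mu>. prob_dist \<mu>})"
    unfolding C01_def by (intro SUP_cong) (simp_all add: sum_mutual_info_detmat_2)
  also have "\<dots> = P_rank lam 2"
  proof (rule cSup_eq_maximum)
    show "P_rank lam 2 \<in> (\<lambda>\<mu>::2 \<Rightarrow> real. P_rank lam 2 * entropy \<mu>) ` {\<mu>. prob_dist \<mu>}"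
      using prob_dist_uniform[where 'a = 2] entropy_uniform[where 'a = 2]
      by (intro image_eqI[where x = "\<lambda>_. 1 / real CARD(2)"]) auto
    show "x \<le> P_rank lam 2" if "x \<in> (\<lambda>\<mu>::2 \<Rightarrow> real. P_rank lam 2 * entropy \<mu>) ` {\<mu>. prob_dist \<mu>}" for x
      using that entropy_le_log_card[where 'a = 2] P_rank_nonneg[OF assms]
      by (auto intro: mult_left_le)
  qed
  finally show ?thesis .
qed

lemma product_distribution_in_Lambda:
  fixes W :: "real^'n::finite^'m::finite"
  assumes "channel W"
  shows "(\<lambda>D. \<Prod>x\<in>UNIV. W$x$(D x)) \<in> Lambda W"
proof -
  have nonneg: "0 \<le> W$x$y" and row_sum: "(\<Sum>y\<in>UNIV. W$x$y) = 1" for x y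
    using assms by (auto simp: channel_def)
  have sum_prod: "(\<Sum>D\<in>UNIV. \<Prod>x\<in>UNIV. V x (D x)) = (\<Prod>x\<in>UNIV. \<Sum>y\<in>UNIV. V x y)"
    for V :: "'m \<Rightarrow> 'n \<Rightarrow> real"
    using prod_sum_PiE[of UNIV "\<lambda>_. UNIV" V] by simp
  have dist: "prob_dist (\<lambda>D. \<Prod>x\<in>UNIV. W$x$(D x))"
    unfolding prob_dist_def sum_prod[of "\<lambda>x y. W$x$y"] by (simp add: nonneg prod_nonneg row_sum)
  have entries: "W$x$y = (\<Sum>D\<in>UNIV. (\<Prod>x'\<in>UNIV. W$x'$(D x')) * detmat D $ x $ y)" for x y
  proof -
    define V where "V x' y' = (if x' \<noteq> x \<or> y' = y then W$x'$y' else 0)" for x' y'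
    have "(\<Prod>x'\<in>UNIV. W$x'$(D x')) * detmat D $ x $ y = (\<Prod>x'\<in>UNIV. V x' (D x'))" for D
    proof (cases "D x = y")
      case True
      then have "V x' (D x') = W$x'$(D x')" for x'
        by (cases "x' = x") (simp_all add: V_def)
      with True show ?thesis
        by (simp add: detmat_def)
    next
      case False
      then have "V x (D x) = 0"
        by (simp add: V_def)
      then have "(\<Prod>x'\<in>UNIV. V x' (D x')) = 0"
        by (meson UNIV_I finite prod_zero)
      with False show ?thesis
        by (simp add: detmat_def)
    qed
    then have "(\<Sum>D\<in>UNIV. (\<Prod>x'\<in>UNIV. W$x'$(D x')) * detmat D $ x $ y)
        = (\<Prod>x'\<in>UNIV. \<Sum>y'\<in>UNIV. V x' y')"
      by (simp only: sum_prod)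
    also have "\<dots> = (\<Prod>x'\<in>UNIV. if x' = x then W$x$y else 1)"
    proof (rule prod.cong)
      show "(\<Sum>y'\<in>UNIV. V x' y') = (if x' = x then W$x$y else 1)" for x'
        by (cases "x' = x") (simp_all add: V_def row_sum)
    qed simp
    finally show ?thesis
      by simp
  qed
  have "W = (\<Sum>D\<in>UNIV. (\<Prod>x\<in>UNIV. W$x$(D x)) *\<^sub>R detmat D)"
    unfolding vec_eq_iff sum_component vector_scaleR_component real_scaleR_def using entries by blast
  with dist show ?thesis
    unfolding Lambda_def by simp
qed

lemma INF_const_minus:
  fixes f :: "'a \<Rightarrow> 'b::{conditionally_complete_linorder, linordered_ab_group_add}"
  assumes "A \<noteq> {}" and "bdd_above (f ` A)"
  shows "(INF x\<in>A. c - f x) = c - (SUP x\<in>A. f x)"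
proof (rule antisym)
  obtain M where M: "\<And>x. x \<in> A \<Longrightarrow> f x \<le> M"
    using assms(2) by (auto simp: bdd_above_def)
  then have "bdd_below ((\<lambda>x. c - f x) ` A)"
    by (intro bdd_belowI2[where m = "c - M"]) (simp add: algebra_simps)
  then have "(INF x\<in>A. c - f x) \<le> c - f x" if "x \<in> A" for x
    using that by (rule cINF_lower)
  then have "f x \<le> c - (INF x\<in>A. c - f x)" if "x \<in> A" for x
    using that by (simp add: algebra_simps)
  then have "(SUP x\<in>A. f x) \<le> c - (INF x\<in>A. c - f x)"
    using assms(1) by (intro cSUP_least)
  then show "(INF x\<in>A. c - f x) \<le> c - (SUP x\<in>A. f x)"
    by (simp add: algebra_simps)
  show "c - (SUP x\<in>A. f x) \<le> (INF x\<in>A. c - f x)"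
    using assms by (intro cINF_greatest) (auto intro: diff_left_mono cSUP_upper)
qed

lemma SUP_const_minus:
  fixes f :: "'a \<Rightarrow> 'b::{conditionally_complete_linorder, linordered_ab_group_add}"
  assumes "A \<noteq> {}" and "bdd_below (f ` A)"
  shows "(SUP x\<in>A. c - f x) = c - (INF x\<in>A. f x)"
proof -
  obtain m where "\<And>x. x \<in> A \<Longrightarrow> m \<le> f x"
    using assms(2) by (auto simp: bdd_below_def)
  then have "bdd_above ((\<lambda>x. c - f x) ` A)"
    by (intro bdd_aboveI2[where M = "c - m"]) (simp add: algebra_simps)
  then show ?thesis
    using INF_const_minus[OF assms(1), of "\<lambda>x. c - f x" c] by simp
qed

theorem proposition1:
  fixes W :: "real^'n::finite^2"
  assumes "CARD('n) \<ge> 2"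
    and "channel W"
  shows "(\<forall>lam\<in>Lambda W. C01 lam = C11 lam)
         \<and> C01_lower W = 1 - P_upper W 1
         \<and> C01_upper W = 1 - P_lower W 1"
proof -
  have dist: "prob_dist lam" if "lam \<in> Lambda W" for lam
    using that by (simp add: Lambda_def)
  have C01: "C01 lam = 1 - P_rank lam 1" if "lam \<in> Lambda W" for lam
    using C01_eq_P_rank_2[OF dist[OF that]] P_rank_1_plus_P_rank_2[OF dist[OF that]] by simp
  have nonempty: "Lambda W \<noteq> {}"
    using product_distribution_in_Lambda[OF assms(2)] by blast
  have P_rank_1_bounds: "0 \<le> P_rank lam 1" "P_rank lam 1 \<le> 1" if "lam \<in> Lambda W" for lam
    using P_rank_1_plus_P_rank_2[OF dist[OF that]] P_rank_nonneg[OF dist[OF that], of 1]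
      P_rank_nonneg[OF dist[OF that], of 2] by linarith+
  have "C01_lower W = (INF lam\<in>Lambda W. 1 - P_rank lam 1)"
    unfolding C01_lower_def by (intro INF_cong) (simp_all add: C01)
  also have "\<dots> = 1 - P_upper W 1"
    unfolding P_upper_def using nonempty P_rank_1_bounds
    by (intro INF_const_minus bdd_aboveI2[where M = 1]) auto
  finally have lower: "C01_lower W = 1 - P_upper W 1" .
  have "C01_upper W = (SUP lam\<in>Lambda W. 1 - P_rank lam 1)"
    unfolding C01_upper_def by (intro SUP_cong) (simp_all add: C01)
  also have "\<dots> = 1 - P_lower W 1"
    unfolding P_lower_def using nonempty P_rank_1_bounds
    by (intro SUP_const_minus bdd_belowI2[where m = 0]) auto
  finally have upper: "C01_upper W = 1 - P_lower W 1" .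
  have "\<forall>lam\<in>Lambda W. C01 lam = C11 lam"
    by (simp add: C01_eq_P_rank_2 C11_eq_P_rank_2 dist)
  with lower upper show ?thesis
    by blast
qed

end
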